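(* Let $m\in(0,1)$, let $U_s$ satisfy (P), and let $\alpha\in(0,1)$. For each $Y\ge0$, $c\mapsto\Phi^s_{\rm app}(Y;c)$ is holomorphic on $\{\mathrm{Im}\,c>0\}$. Moreover there is $\gamma_1\in(0,1)$ such that if $\mathrm{Im}\,c>0$ and $|c|<\gamma_1$, then $$\Phi^s_{\rm app}(0;c)=-c+\frac{\alpha}{(1-m^2)^{1/2}}+O(1)\,\alpha\,|c\log\mathrm{Im}\,c|,\qquad \partial_Y\Phi^s_{\rm app}(0;c)=1+O(1)\,\alpha\,|\log\mathrm{Im}\,c|,$$ where $O(1)$ denotes quantities bounded by a constant independent of $\alpha$ and $c$.
   Context: (P) denotes: $U_s\in C^3([0,\infty))$, $U_s(0)=0$, $U_s>0$ on $(0,\infty)$, $U_s\to1$ as $Y\to\infty$, $U_s'(0)=1$, $s_1e^{-s_0Y}\le U_s'\le s_2e^{-s_0Y}$ for constants $s_0,s_1,s_2>0$, $H(Y):=\frac{-U_s''(1-m^2U_s^2)-2m^2U_s(U_s')^2}{|U_s''|+(U_s')^2}\ge\sigma_1>0$, and $|U_s'''/U_s''|+|U_s''|/U_s'+(1-U_s)/U_s'\le\sigma_2$. Principal branches of $\log$ and powers are used. Definitions: $A(Y)=1-m^2(U_s(Y)-c)^2$, $A_\infty=1-m^2(1-c)^2$, $\beta=\alpha A_\infty^{1/2}$; $\varphi_+(Y)=U_s(Y)-c$, $\varphi_-(Y)=(U_s(Y)-c)\int_1^Y\frac{dX}{(U_s(X)-c)^2}-m^2(U_s(Y)-c)Y$;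 $\varphi_{1,\alpha}(Y)=-2e^{-\beta Y}\varphi_+(Y)\int_0^Y\varphi_-(X)A^{-2}(X)U_s'(X)\,dX-2e^{-\beta Y}\varphi_-(Y)\int_Y^\infty\varphi_+(X)A^{-2}(X)U_s'(X)\,dX$; $\Phi^s_{\rm app}(Y;c)=e^{-\beta Y}(U_s(Y)-c)+\beta\varphi_{1,\alpha}(Y)$. *)

theory Defs
  imports "HOL-Analysis.Analysis"
begin

definition propP ::
  "real \<Rightarrow> (real \<Rightarrow> real) \<Rightarrow> (real \<Rightarrow> real) \<Rightarrow> (real \<Rightarrow> real) \<Rightarrow> (real \<Rightarrow> real) \<Rightarrow> bool" where
  "propP m U U1 U2 U3 \<longleftrightarrow>
     (\<forall>Y\<ge>0. (U has_real_derivative U1 Y) (at Y within {0..})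
            \<and> (U1 has_real_derivative U2 Y) (at Y within {0..})
            \<and> (U2 has_real_derivative U3 Y) (at Y within {0..}))
   \<and> continuous_on {0..} U3
   \<and> U 0 = 0
   \<and> (\<forall>Y>0. U Y > 0)
   \<and> (U \<longlongrightarrow> 1) at_top
   \<and> U1 0 = 1
   \<and> (\<exists>s0 s1 s2. s0 > 0 \<and> s1 > 0 \<and> s2 > 0 \<and>
        (\<forall>Y\<ge>0. s1 * exp (- s0 * Y) \<le> U1 Y \<and> U1 Y \<le> s2 * exp (- s0 * Y)))
   \<and> (\<exists>\<sigma>1>0. \<forall>Y\<ge>0.
        (- U2 Y * (1 - m\<^sup>2 * (U Y)\<^sup>2) - 2 * m\<^sup>2 * U Y * (U1 Y)\<^sup>2)
          / (\<bar>U2 Y\<bar> + (U1 Y)\<^sup>2) \<ge> \<sigma>1)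
   \<and> (\<exists>\<sigma>2. \<forall>Y\<ge>0.
        \<bar>U3 Y / U2 Y\<bar> + \<bar>U2 Y\<bar> / U1 Y + (1 - U Y) / U1 Y \<le> \<sigma>2)"

definition oint :: "real \<Rightarrow> real \<Rightarrow> (real \<Rightarrow> complex) \<Rightarrow> complex" where
  "oint a b f = (if a \<le> b then integral {a..b} f else - integral {b..a} f)"

definition Acoef :: "real \<Rightarrow> (real \<Rightarrow> real) \<Rightarrow> complex \<Rightarrow> real \<Rightarrow> complex" where
  "Acoef m U c Y = 1 - (complex_of_real m)\<^sup>2 * (complex_of_real (U Y) - c)\<^sup>2"

definition Ainf :: "real \<Rightarrow> complex \<Rightarrow> complex" where
  "Ainf m c = 1 - (complex_of_real m)\<^sup>2 * (1 - c)\<^sup>2"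

definition beta :: "real \<Rightarrow> real \<Rightarrow> complex \<Rightarrow> complex" where
  "beta m \<alpha> c = complex_of_real \<alpha> * csqrt (Ainf m c)"

definition phi_plus :: "(real \<Rightarrow> real) \<Rightarrow> complex \<Rightarrow> real \<Rightarrow> complex" where
  "phi_plus U c Y = complex_of_real (U Y) - c"

definition phi_minus :: "real \<Rightarrow> (real \<Rightarrow> real) \<Rightarrow> complex \<Rightarrow> real \<Rightarrow> complex" where
  "phi_minus m U c Y =
     (complex_of_real (U Y) - c) * oint 1 Y (\<lambda>X. 1 / (complex_of_real (U X) - c)\<^sup>2)
     - (complex_of_real m)\<^sup>2 * (complex_of_real (U Y) - c) * complex_of_real Y"

definition phi1 ::
  "real \<Rightarrow> (real \<Rightarrow> real) \<Rightarrow> (real \<Rightarrow> real) \<Rightarrow> real \<Rightarrow> complex \<Rightarrow> real \<Rightarrow> complex" where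
  "phi1 m U U1 \<alpha> c Y =
     - 2 * exp (- beta m \<alpha> c * complex_of_real Y) * phi_plus U c Y *
         integral {0..Y} (\<lambda>X. phi_minus m U c X / (Acoef m U c X)\<^sup>2 * complex_of_real (U1 X))
     - 2 * exp (- beta m \<alpha> c * complex_of_real Y) * phi_minus m U c Y *
         integral {Y..} (\<lambda>X. phi_plus U c X / (Acoef m U c X)\<^sup>2 * complex_of_real (U1 X))"

definition Phi_app ::
  "real \<Rightarrow> (real \<Rightarrow> real) \<Rightarrow> (real \<Rightarrow> real) \<Rightarrow> real \<Rightarrow> complex \<Rightarrow> real \<Rightarrow> complex" where
  "Phi_app m U U1 \<alpha> c Y =
     exp (- beta m \<alpha> c * complex_of_real Y) * (complex_of_real (U Y) - c)
     + beta m \<alpha> c * phi1 m U U1 \<alpha> c Y"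

end

theory Submission
  imports Defs "HOL-Complex_Analysis.Complex_Analysis"
begin

text \<open>Since \<open>1/(2 m\<^sup>2 A)\<close> is a primitive of \<open>\<phi>\<^sub>+ U'/A\<^sup>2\<close> and \<open>A \<rightarrow> A\<^sub>\<infinity>\<close>, the tail integral in
  \<open>\<phi>\<^sub>1\<close> is explicit, and integrating by parts against a primitive of \<open>(U - c)\<^sup>-\<^sup>2\<close> removes the
  oriented integral from the other one. After these rewritings \<open>\<Phi>\<^sub>a\<^sub>p\<^sub>p(Y; c)\<close> is assembled from
  integrals \<open>\<integral> h(U(t) - c) v(t) dt\<close> with \<open>h\<close> holomorphic in the lower half plane, hence is holomorphic
  in \<open>c\<close>. At \<open>Y = 0\<close> everything is explicit except \<open>J(c) = \<integral>\<^sub>0\<^sup>1 (U - c)\<^sup>-\<^sup>2\<close>; writing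
  \<open>(U - c)\<^sup>-\<^sup>2 = (-1/(U'(U - c)))' - U''/(U'\<^sup>2(U - c))\<close> gives \<open>J(c) = -1/c + O(|log Im c|)\<close>, because
  \<open>\<integral>\<^sub>0\<^sup>1 U'/|U - c|\<close> is a difference of two \<open>arsinh\<close> values of size \<open>O(|log Im c|)\<close>.\<close>

lemma norm_one_minus_sq_ge:
  fixes w :: complex
  shows "m\<^sup>2 * (Im w)\<^sup>2 \<le> cmod (1 - (complex_of_real m)\<^sup>2 * w\<^sup>2)"
proof -
  have factor: "1 - (complex_of_real m)\<^sup>2 * w\<^sup>2 = (1 - of_real m * w) * (1 + of_real m * w)"
    by (simp add: algebra_simps power2_eq_square)
  have "\<bar>m\<bar> * \<bar>Im w\<bar> \<le> cmod (1 - of_real m * w)" "\<bar>m\<bar> * \<bar>Im w\<bar> \<le> cmod (1 + of_real m * w)"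
    using abs_Im_le_cmod[of "1 - of_real m * w"] abs_Im_le_cmod[of "1 + of_real m * w"]
    by (simp_all add: abs_mult)
  then have "(\<bar>m\<bar> * \<bar>Im w\<bar>) * (\<bar>m\<bar> * \<bar>Im w\<bar>) \<le> cmod (1 - of_real m * w) * cmod (1 + of_real m * w)"
    by (intro mult_mono) auto
  moreover have "m\<^sup>2 * (Im w)\<^sup>2 = (\<bar>m\<bar> * \<bar>Im w\<bar>) * (\<bar>m\<bar> * \<bar>Im w\<bar>)"
    by (metis abs_mult abs_mult_self_eq power2_eq_square power_mult_distrib)
  ultimately show ?thesis
    unfolding factor norm_mult by simp
qed

lemma one_minus_sq_nonzero:
  fixes w :: complex
  assumes "m \<noteq> 0" and "Im w \<noteq> 0"
  shows "1 - (complex_of_real m)\<^sup>2 * w\<^sup>2 \<noteq> 0"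
proof -
  have "0 < m\<^sup>2 * (Im w)\<^sup>2"
    using assms by simp
  then show ?thesis
    using norm_one_minus_sq_ge[of m w] by auto
qed

lemma of_real_minus_nonzero: "Im c > 0 \<Longrightarrow> complex_of_real u - c \<noteq> 0"
  by (metis Im_complex_of_real diff_zero less_irrefl right_minus_eq)

lemma holomorphic_on_integral_shift_upper:
  fixes h :: "complex \<Rightarrow> complex" and u v :: "real \<Rightarrow> real"
  assumes hol: "h holomorphic_on {w. Im w < 0}"
    and cont_u: "continuous_on {a..b} u" and cont_v: "continuous_on {a..b} v"
    and eq: "\<And>c t. Im c > 0 \<Longrightarrow> t \<in> {a..b} \<Longrightarrow> f c t = h (of_real (u t) - c) * of_real (v t)"
  shows "(\<lambda>c. integral {a..b} (f c)) holomorphic_on {c. Im c > 0}"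
proof -
  have lower: "open {w::complex. Im w < 0}"
    by (simp add: open_halfspace_Im_lt)
  have L: "(\<lambda>c. integral (cbox a b) (\<lambda>t. h (of_real (u t) - c) * of_real (v t))) holomorphic_on {c. Im c > 0}"
  proof (rule leibniz_rule_holomorphic[where fx="\<lambda>c t. - deriv h (of_real (u t) - c) * of_real (v t)"])
    fix c t assume c: "c \<in> {c. Im c > 0}" and t: "t \<in> cbox a b"
    have "(h has_field_derivative deriv h (of_real (u t) - c)) (at (of_real (u t) - c))"
      using holomorphic_derivI[OF hol lower] c by auto
    moreover have "((\<lambda>c. of_real (u t) - c) has_field_derivative -1) (at c)"
      by (auto intro!: derivative_eq_intros)
    ultimately have "((\<lambda>c. h (of_real (u t) - c) * of_real (v t)) has_field_derivative
         deriv h (of_real (u t) - c) * (-1) * of_real (v t)) (at c)"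
      by (intro DERIV_cmult_right DERIV_chain2)
    then show "((\<lambda>c. h (of_real (u t) - c) * of_real (v t)) has_field_derivative
         - deriv h (of_real (u t) - c) * of_real (v t)) (at c within {c. Im c > 0})"
      by (auto intro: has_field_derivative_at_within)
  next
    fix c :: complex assume c: "c \<in> {c. Im c > 0}"
    have "continuous_on {a..b} (\<lambda>t. h (of_real (u t) - c))"
      by (rule continuous_on_compose2[OF holomorphic_on_imp_continuous_on[OF hol]])
         (use c in \<open>auto intro!: continuous_intros cont_u\<close>)
    then show "(\<lambda>t. h (of_real (u t) - c) * of_real (v t)) integrable_on cbox a b"
      by (auto intro!: integrable_continuous_interval continuous_intros cont_v)
  next
    have "continuous_on {w. Im w < 0} (deriv h)"
      by (rule holomorphic_on_imp_continuous_on[OF holomorphic_deriv[OF hol lower]])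
    then have "continuous_on ({c. Im c > 0} \<times> cbox a b) (\<lambda>p. deriv h (of_real (u (snd p)) - fst p))"
      by (rule continuous_on_compose2)
         (auto intro!: continuous_intros continuous_on_compose2[OF cont_u] simp: cbox_interval)
    moreover have "continuous_on ({c. Im c > 0} \<times> cbox a b) (\<lambda>p. v (snd p))"
      by (auto intro!: continuous_intros continuous_on_compose2[OF cont_v] simp: cbox_interval)
    ultimately show "continuous_on ({c. Im c > 0} \<times> cbox a b)
        (\<lambda>(c, t). - deriv h (of_real (u t) - c) * complex_of_real (v t))"
      by (auto simp: case_prod_unfold intro!: continuous_intros)
  next
    show "convex {c. Im c > 0}"
      using convex_halfspace_Im_gt[of 0] by simp
  qed
  show ?thesis
    by (rule holomorphic_transform[OF L]) (use eq in \<open>auto simp: cbox_interval intro!: integral_cong\<close>)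
qed

lemma has_integral_Ici_of_primitive:
  fixes f F :: "real \<Rightarrow> 'a::euclidean_space"
  assumes deriv: "\<And>x. x \<ge> a \<Longrightarrow> (F has_vector_derivative f x) (at x within {a..})"
    and dom: "\<And>x. x \<ge> a \<Longrightarrow> norm (f x) \<le> h x" and int_h: "h integrable_on {a..}"
    and lim: "(F \<longlongrightarrow> L) at_top"
  shows "(f has_integral (L - F a)) {a..}"
proof -
  define f_n where "f_n n x = (if x \<in> {a..real n} then f x else 0)" for n :: nat and x
  have FTC: "(f has_integral (F b - F a)) {a..b}" if "a \<le> b" for b
    by (rule fundamental_theorem_of_calculus[OF that])
       (auto intro: has_vector_derivative_within_subset[OF deriv])
  have eventually_ge: "\<forall>\<^sub>F n in sequentially. x \<le> real n" for x :: real
    by (rule eventually_mono[OF eventually_ge_at_top[of "nat \<lceil>x\<rceil>"]])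
       (meson le_nat_iff of_nat_le_iff order.trans real_nat_ceiling_ge)
  show ?thesis
  proof (rule has_integral_dominated_convergence[where f=f_n and h=h])
    fix n
    show "(f_n n has_integral (if a \<le> real n then F (real n) - F a else 0)) {a..}"
      unfolding f_n_def using FTC[of "real n"] by (subst has_integral_restrict) auto
    show "\<forall>x\<in>{a..}. norm (f_n n x) \<le> h x"
      using dom by (auto simp: f_n_def intro: order.trans[OF norm_ge_zero])
  next
    show "\<forall>x\<in>{a..}. (\<lambda>n. f_n n x) \<longlonglongrightarrow> f x"
    proof
      fix x assume "x \<in> {a..}"
      have "\<forall>\<^sub>F n in sequentially. f_n n x = f x"
        using eventually_ge[of x] by eventually_elim (use \<open>x \<in> {a..}\<close> in \<open>simp add: f_n_def\<close>)
      then show "(\<lambda>n. f_n n x) \<longlonglongrightarrow> f x"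
        by (rule tendsto_eventually)
    qed
    have "(\<lambda>n. F (real n) - F a) \<longlonglongrightarrow> L - F a"
      by (intro tendsto_diff filterlim_compose[OF lim filterlim_real_sequentially] tendsto_const)
    then show "(\<lambda>n. if a \<le> real n then F (real n) - F a else 0) \<longlonglongrightarrow> L - F a"
      by (rule Lim_transform_eventually) (auto intro: eventually_mono[OF eventually_ge[of a]])
  qed (fact int_h)
qed

lemma has_field_derivative_inv_one_minus_sq:
  fixes M w :: complex
  assumes "M \<noteq> 0" and "1 - M\<^sup>2 * w\<^sup>2 \<noteq> 0"
  shows "((\<lambda>w. 1 / (2 * M\<^sup>2 * (1 - M\<^sup>2 * w\<^sup>2))) has_field_derivative w / (1 - M\<^sup>2 * w\<^sup>2)\<^sup>2) (at w)"
proof (rule DERIV_cong)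
  define A where "A = 1 - M\<^sup>2 * w\<^sup>2"
  show "((\<lambda>w. 1 / (2 * M\<^sup>2 * (1 - M\<^sup>2 * w\<^sup>2))) has_field_derivative
      - (2 * M\<^sup>2 * (- (M\<^sup>2 * (2 * w)))) / (2 * M\<^sup>2 * A)\<^sup>2) (at w)"
    using assms unfolding A_def by (auto intro!: derivative_eq_intros simp: power2_eq_square)
  show "- (2 * M\<^sup>2 * (- (M\<^sup>2 * (2 * w)))) / (2 * M\<^sup>2 * A)\<^sup>2 = w / (1 - M\<^sup>2 * w\<^sup>2)\<^sup>2"
    using assms unfolding A_def[symmetric] by (simp add: field_simps power2_eq_square)
qed

lemma arsinh_two_div_le:
  fixes b :: real
  assumes "0 < b" "b < 1"
  shows "arsinh (2 / b) \<le> ln 5 - ln b"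
proof -
  have "sqrt ((2/b)\<^sup>2 + 1) \<le> 3 / b"
  proof (rule real_le_lsqrt)
    have "b * b \<le> 1" using assms by (intro mult_le_one) auto
    then show "(2/b)\<^sup>2 + 1 \<le> (3/b)\<^sup>2" using assms by (simp add: field_simps power2_eq_square)
  qed (use assms in auto)
  then have "ln (2 / b + sqrt ((2/b)\<^sup>2 + 1)) \<le> ln (5 / b)"
    using assms by (subst ln_le_cancel_iff) (auto simp: field_simps add_pos_nonneg)
  then show ?thesis
    using assms by (simp add: arsinh_real_def ln_div)
qed

lemma ln_two_le_abs_ln:
  fixes b :: real
  assumes "0 < b" "b < 1/2"
  shows "ln 2 \<le> \<bar>ln b\<bar>"
proof -
  have "ln b < ln (1/2)"
    using assms by simp
  then show ?thesis
    by (simp add: ln_div)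
qed

lemma arsinh_diff_le_log:
  fixes a b u :: real
  assumes a: "\<bar>a\<bar> < 1/2" and b: "0 < b" "b < 1/2" and u: "0 \<le> u" "u \<le> 1"
  shows "arsinh ((u - a) / b) - arsinh (- a / b) \<le> 8 * \<bar>ln b\<bar>"
proof -
  have arsinh_mono: "arsinh x \<le> arsinh y" if "x \<le> y" for x y :: real
    using arsinh_less_iff_real[of y x] that by linarith
  have log: "ln 2 \<le> \<bar>ln b\<bar>"
    using ln_two_le_abs_ln b by blast
  have "ln (5::real) \<le> ln 8"
    by simp
  also have "\<dots> = 3 * ln 2"
    using ln_realpow[of "2::real" 3] by simp
  finally have "arsinh (2 / b) \<le> 4 * \<bar>ln b\<bar>"
    using arsinh_two_div_le[of b] b log by linarith
  moreover have "arsinh ((u - a) / b) \<le> arsinh (2 / b)" "arsinh (a / b) \<le> arsinh (2 / b)"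
    using a b u by (auto intro!: arsinh_mono divide_right_mono)
  ultimately show ?thesis
    by simp
qed

lemma norm_csqrt_minus_sqrt_le:
  assumes "r > 0"
  shows "cmod (csqrt z - of_real (sqrt r)) \<le> cmod (z - of_real r) / sqrt r"
proof -
  define s where "s = csqrt z"
  have "sqrt r \<le> Re (s + of_real (sqrt r))"
    using Re_csqrt[of z] by (simp add: s_def)
  then have lb: "sqrt r \<le> cmod (s + of_real (sqrt r))"
    using complex_Re_le_cmod order_trans by blast
  have "s\<^sup>2 = z"
    by (simp add: s_def)
  then have "(s - of_real (sqrt r)) * (s + of_real (sqrt r)) = z - of_real r"
    using assms by (simp add: algebra_simps power2_eq_square flip: of_real_mult)
  then have "cmod (s - of_real (sqrt r)) * sqrt r \<le> cmod (z - of_real r)"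
    by (metis lb mult_left_mono norm_ge_zero norm_mult)
  then show ?thesis
    using assms by (simp add: s_def field_simps)
qed

(* Closed form of the tail integral \<int>\<^sub>0\<^sup>\<infinity> \<phi>\<^sub>+ U'/A\<^sup>2 in \<phi>\<^sub>1 at Y = 0. *)
definition plus_tail_at_0 :: "real \<Rightarrow> complex \<Rightarrow> complex" where
  "plus_tail_at_0 m c = (1 - 2 * c) / (2 * Ainf m c * (1 - (complex_of_real m)\<^sup>2 * c\<^sup>2))"

(* \<partial>\<^sub>Y\<Phi>\<^sub>a\<^sub>p\<^sub>p(0; c) - 1, with J standing for \<int>\<^sub>0\<^sup>1 (U - c)\<^sup>-\<^sup>2. *)
definition slope_correction :: "real \<Rightarrow> real \<Rightarrow> complex \<Rightarrow> complex \<Rightarrow> complex" where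
  "slope_correction m \<alpha> c J = beta m \<alpha> c * c + beta m \<alpha> c *
     ((2 * beta m \<alpha> c * (c * J) - 2 * (- 1 / c - J + (complex_of_real m)\<^sup>2 * c)) * plus_tail_at_0 m c)"

context
  fixes m :: real
  assumes m: "0 < m" "m < 1"
begin

lemma one_minus_m_sq_pos: "0 < 1 - m\<^sup>2"
proof -
  have "m\<^sup>2 < 1\<^sup>2"
    using m by (intro power_strict_mono) auto
  then show ?thesis
    by simp
qed

lemma m_sq_le_1: "m\<^sup>2 \<le> 1"
  using one_minus_m_sq_pos by simp

context
  fixes c :: complex
  assumes c: "cmod c \<le> 1/2" "cmod c \<le> (1 - m\<^sup>2) / 6"
begin

lemma norm_Ainf_minus_le: "cmod (Ainf m c - of_real (1 - m\<^sup>2)) \<le> 3 * cmod c"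
proof -
  have "Ainf m c - of_real (1 - m\<^sup>2) = (complex_of_real m)\<^sup>2 * (c * (2 - c))"
    by (simp add: Ainf_def power2_eq_square algebra_simps)
  moreover have "cmod (2 - c) \<le> 3"
    using norm_triangle_ineq4[of 2 c] c by simp
  moreover note m_sq_le_1
  moreover have "cmod c * cmod (2 - c) \<le> cmod c * 3"
    using \<open>cmod (2 - c) \<le> 3\<close> by (simp add: mult_left_mono)
  ultimately show ?thesis
    using mult_left_le_one_le[of "cmod c * cmod (2 - c)" "m\<^sup>2"]
    by (simp add: norm_mult norm_power mult.commute)
qed

lemma norm_Ainf_ge: "(1 - m\<^sup>2) / 2 \<le> cmod (Ainf m c)"
proof -
  have "cmod (complex_of_real (1 - m\<^sup>2)) - cmod (Ainf m c) \<le> cmod (Ainf m c - of_real (1 - m\<^sup>2))"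
    by (metis norm_minus_commute norm_triangle_ineq2)
  moreover have "cmod (complex_of_real (1 - m\<^sup>2)) = 1 - m\<^sup>2"
    using one_minus_m_sq_pos by (metis norm_of_real abs_of_pos)
  moreover have "6 * cmod c \<le> 1 - m\<^sup>2"
    using c by simp
  ultimately have "1 - m\<^sup>2 \<le> 2 * cmod (Ainf m c)"
    using norm_Ainf_minus_le by linarith
  then show ?thesis
    by simp
qed

lemma norm_csqrt_Ainf_le: "cmod (csqrt (Ainf m c)) \<le> 2"
proof -
  have "cmod (Ainf m c) \<le> cmod (complex_of_real (1 - m\<^sup>2)) + cmod (Ainf m c - of_real (1 - m\<^sup>2))"
    by (metis add.commute diff_add_cancel norm_triangle_ineq)
  moreover have "cmod (complex_of_real (1 - m\<^sup>2)) \<le> 1"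
    using one_minus_m_sq_pos by (simp only: norm_of_real) simp
  ultimately have "cmod (Ainf m c) \<le> 2\<^sup>2"
    using norm_Ainf_minus_le c by simp
  then show ?thesis
    using real_sqrt_le_mono[of "cmod (Ainf m c)" "2\<^sup>2"] by simp
qed

lemma norm_csqrt_Ainf_ge: "sqrt ((1 - m\<^sup>2) / 2) \<le> cmod (csqrt (Ainf m c))"
  using norm_Ainf_ge by (simp add: real_sqrt_le_mono)

lemma norm_one_minus_sq_c_ge: "1/2 \<le> cmod (1 - (complex_of_real m)\<^sup>2 * c\<^sup>2)"
proof -
  have "(cmod c)\<^sup>2 \<le> (1/2)\<^sup>2"
    using c by (intro power_mono) auto
  moreover have "m\<^sup>2 * (cmod c)\<^sup>2 \<le> (cmod c)\<^sup>2"
    using one_minus_m_sq_pos by (intro mult_left_le_one_le) auto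
  moreover have "cmod ((complex_of_real m)\<^sup>2 * c\<^sup>2) = m\<^sup>2 * (cmod c)\<^sup>2"
    by (simp add: norm_mult norm_power)
  ultimately have "cmod ((complex_of_real m)\<^sup>2 * c\<^sup>2) \<le> (1/2)\<^sup>2"
    by linarith
  then show ?thesis
    using norm_triangle_ineq2[of 1 "(complex_of_real m)\<^sup>2 * c\<^sup>2"] by (simp add: power2_eq_square)
qed

lemma norm_plus_tail_at_0_le: "cmod (plus_tail_at_0 m c) \<le> 4 / (1 - m\<^sup>2)"
proof -
  have "cmod (1 - 2 * c) \<le> 2"
    using norm_triangle_ineq4[of 1 "2 * c"] c by (simp add: norm_mult)
  moreover have "2 * ((1 - m\<^sup>2) / 2) * (1/2) \<le> 2 * cmod (Ainf m c) * cmod (1 - (complex_of_real m)\<^sup>2 * c\<^sup>2)"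
    using norm_Ainf_ge norm_one_minus_sq_c_ge one_minus_m_sq_pos by (intro mult_mono) auto
  ultimately have "cmod (1 - 2 * c) / (2 * cmod (Ainf m c) * cmod (1 - (complex_of_real m)\<^sup>2 * c\<^sup>2))
      \<le> 2 / ((1 - m\<^sup>2) / 2)"
    using one_minus_m_sq_pos by (intro frac_le) auto
  then show ?thesis
    by (simp add: plus_tail_at_0_def norm_divide norm_mult)
qed

lemma norm_tail_numerator_le:
  "cmod ((complex_of_real (sqrt (1 - m\<^sup>2)) - csqrt (Ainf m c)) - 2 * c * complex_of_real (sqrt (1 - m\<^sup>2))
      + csqrt (Ainf m c) * (complex_of_real m)\<^sup>2 * c\<^sup>2) \<le> cmod c * (3 / sqrt (1 - m\<^sup>2) + 4)"
proof -
  define s s0 where "s = csqrt (Ainf m c)" and "s0 = sqrt (1 - m\<^sup>2)"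
  have s0: "0 < s0" "s0 \<le> 1"
    using one_minus_m_sq_pos m by (auto simp: s0_def)
  have "cmod (Ainf m c - of_real (1 - m\<^sup>2)) / sqrt (1 - m\<^sup>2) \<le> 3 * cmod c / sqrt (1 - m\<^sup>2)"
    using m_sq_le_1 by (intro divide_right_mono norm_Ainf_minus_le) simp
  from order_trans[OF norm_csqrt_minus_sqrt_le[OF one_minus_m_sq_pos] this]
  have "cmod (complex_of_real s0 - s) \<le> 3 * cmod c / s0"
    by (simp add: s_def s0_def norm_minus_commute)
  moreover have "cmod (2 * c * complex_of_real s0) \<le> 2 * cmod c"
    using s0 by (simp add: norm_mult mult_left_le)
  moreover have "cmod (s * (complex_of_real m)\<^sup>2 * c\<^sup>2) \<le> 2 * cmod c"
  proof -
    have "cmod ((complex_of_real m)\<^sup>2 * c\<^sup>2) = m\<^sup>2 * (cmod c * cmod c)"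
      by (simp add: norm_mult norm_power power2_eq_square)
    also have "\<dots> \<le> 1 * (cmod c * 1)"
      using c by (intro mult_mono m_sq_le_1 mult_left_mono) auto
    finally show ?thesis
      using norm_csqrt_Ainf_le by (simp add: s_def norm_mult mult.assoc mult_mono)
  qed
  ultimately show ?thesis
    using norm_triangle_ineq[of "(complex_of_real s0 - s) - 2 * c * complex_of_real s0" "s * (complex_of_real m)\<^sup>2 * c\<^sup>2"]
      norm_triangle_ineq4[of "complex_of_real s0 - s" "2 * c * complex_of_real s0"]
    by (simp add: s_def s0_def field_simps)
qed

lemma norm_two_csqrt_Ainf_plus_tail_minus_le:
  "cmod (2 * csqrt (Ainf m c) * plus_tail_at_0 m c - 1 / complex_of_real (sqrt (1 - m\<^sup>2)))
     \<le> cmod c * ((6 / sqrt (1 - m\<^sup>2) + 8) / (sqrt ((1 - m\<^sup>2) / 2) * sqrt (1 - m\<^sup>2)))"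
proof -
  define s s0 A0 where "s = csqrt (Ainf m c)" and "s0 = sqrt (1 - m\<^sup>2)"
    and "A0 = 1 - (complex_of_real m)\<^sup>2 * c\<^sup>2"
  define N where "N = (complex_of_real s0 - s) - 2 * c * complex_of_real s0 + s * (complex_of_real m)\<^sup>2 * c\<^sup>2"
  have s0: "0 < s0"
    using one_minus_m_sq_pos by (simp add: s0_def)
  have s: "sqrt ((1 - m\<^sup>2) / 2) \<le> cmod s"
    using norm_csqrt_Ainf_ge by (simp add: s_def)
  have A0: "1/2 \<le> cmod A0"
    using norm_one_minus_sq_c_ge by (simp add: A0_def)
  have nonzero: "s \<noteq> 0" "A0 \<noteq> 0"
    using s A0 one_minus_m_sq_pos by auto
  have "2 * s * ((1 - 2 * c) / (2 * s\<^sup>2 * A0)) - 1 / z = ((z - s) - 2 * c * z + s * (1 - A0)) / (s * A0 * z)"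
    if "z \<noteq> 0" for z
    using nonzero that by (simp add: field_simps power2_eq_square)
  then have N: "2 * s * plus_tail_at_0 m c - 1 / complex_of_real s0 = N / (s * A0 * complex_of_real s0)"
    using s0 by (simp add: plus_tail_at_0_def N_def A0_def s_def mult.assoc)
  have "sqrt ((1 - m\<^sup>2) / 2) * (1/2) * s0 \<le> cmod (s * A0 * complex_of_real s0)"
  proof -
    have "sqrt ((1 - m\<^sup>2) / 2) * (1/2) \<le> cmod s * cmod A0"
      using s A0 by (intro mult_mono) auto
    then show ?thesis
      using s0 by (simp add: norm_mult mult_right_mono)
  qed
  with norm_tail_numerator_le
  have "cmod (2 * s * plus_tail_at_0 m c - 1 / complex_of_real s0)
      \<le> cmod c * (3 / s0 + 4) / (sqrt ((1 - m\<^sup>2) / 2) * (1/2) * s0)"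
    unfolding N norm_divide using s0 one_minus_m_sq_pos by (intro frac_le) (auto simp: N_def s_def s0_def)
  also have "\<dots> = cmod c * ((6 / s0 + 8) / (sqrt ((1 - m\<^sup>2) / 2) * s0))"
    by (simp add: field_simps)
  finally show ?thesis
    by (simp only: s_def s0_def)
qed

lemma norm_value_at_0_estimate:
  assumes \<alpha>: "0 \<le> \<alpha>" and "c \<noteq> 0" and J: "cmod (J + 1 / c) \<le> L"
  shows "cmod (- c - 2 * beta m \<alpha> c * (c * J) * plus_tail_at_0 m c - (- c + of_real (\<alpha> / sqrt (1 - m\<^sup>2))))
    \<le> \<alpha> * cmod c * ((6 / sqrt (1 - m\<^sup>2) + 8) / (sqrt ((1 - m\<^sup>2) / 2) * sqrt (1 - m\<^sup>2)) + 16 / (1 - m\<^sup>2) * L)"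
proof -
  define s Q T where "s = csqrt (Ainf m c)" and "Q = plus_tail_at_0 m c" and "T = J + 1 / c"
  have "- c - 2 * beta m \<alpha> c * (c * J) * Q - (- c + of_real (\<alpha> / sqrt (1 - m\<^sup>2)))
      = of_real \<alpha> * ((2 * s * Q - 1 / complex_of_real (sqrt (1 - m\<^sup>2))) - 2 * s * Q * c * T)"
    using \<open>c \<noteq> 0\<close> by (simp add: beta_def s_def T_def field_simps)
  moreover have "cmod (2 * s * Q * c * T) \<le> cmod c * (16 / (1 - m\<^sup>2) * L)"
  proof -
    have "cmod (2 * s * Q * c * T) = 2 * cmod s * cmod Q * cmod c * cmod T"
      by (simp add: norm_mult)
    also have "\<dots> \<le> 2 * 2 * (4 / (1 - m\<^sup>2)) * cmod c * L"
      using norm_csqrt_Ainf_le norm_plus_tail_at_0_le J one_minus_m_sq_pos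
      by (intro mult_mono) (auto simp: s_def Q_def T_def)
    finally show ?thesis
      by (simp add: algebra_simps)
  qed
  ultimately have "cmod (- c - 2 * beta m \<alpha> c * (c * J) * Q - (- c + of_real (\<alpha> / sqrt (1 - m\<^sup>2))))
      = \<alpha> * cmod ((2 * s * Q - 1 / complex_of_real (sqrt (1 - m\<^sup>2))) - 2 * s * Q * c * T)"
    using \<alpha> by (simp add: norm_mult)
  also have "\<dots> \<le> \<alpha> * (cmod (2 * s * Q - 1 / complex_of_real (sqrt (1 - m\<^sup>2))) + cmod (2 * s * Q * c * T))"
    using \<alpha> by (intro mult_left_mono norm_triangle_ineq4)
  also have "\<dots> \<le> \<alpha> * (cmod c * ((6 / sqrt (1 - m\<^sup>2) + 8) / (sqrt ((1 - m\<^sup>2) / 2) * sqrt (1 - m\<^sup>2)))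
      + cmod c * (16 / (1 - m\<^sup>2) * L))"
    using \<alpha> \<open>cmod (2 * s * Q * c * T) \<le> _\<close> norm_two_csqrt_Ainf_plus_tail_minus_le
    by (intro mult_left_mono add_mono) (auto simp: s_def Q_def)
  finally show ?thesis
    by (simp add: Q_def distrib_left mult.assoc)
qed

lemma norm_beta_le: "0 \<le> \<alpha> \<Longrightarrow> cmod (beta m \<alpha> c) \<le> 2 * \<alpha>"
  using mult_left_mono[OF norm_csqrt_Ainf_le] by (simp add: beta_def norm_mult mult.commute)

lemma norm_slope_factor_le:
  assumes \<alpha>: "0 \<le> \<alpha>" "\<alpha> \<le> 1" and "c \<noteq> 0" and J: "cmod (J + 1 / c) \<le> L"
  shows "cmod (2 * beta m \<alpha> c * (c * J) - 2 * (- 1 / c - J + (complex_of_real m)\<^sup>2 * c)) \<le> 4 * L + 5"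
proof -
  define D where "D = - 1 / c - J + (complex_of_real m)\<^sup>2 * c"
  have "c * J = c * (J + 1 / c) - 1"
    using \<open>c \<noteq> 0\<close> by (simp add: field_simps)
  moreover have "cmod (c * (J + 1 / c)) \<le> 1/2 * L"
    unfolding norm_mult using c J by (intro mult_mono) auto
  ultimately have "cmod (c * J) \<le> L / 2 + 1"
    using norm_triangle_ineq4[of "c * (J + 1 / c)" 1] by simp
  then have "cmod (beta m \<alpha> c) * cmod (c * J) \<le> 2 * (L / 2 + 1)"
    using norm_beta_le[OF \<alpha>(1)] \<alpha> by (intro mult_mono) auto
  moreover have "cmod D \<le> L + 1/2"
  proof -
    have "cmod ((complex_of_real m)\<^sup>2 * c) \<le> 1 * (1/2)"
      unfolding norm_mult norm_power norm_of_real using m_sq_le_1 c by (intro mult_mono) auto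
    moreover have "D = - (J + 1 / c) + (complex_of_real m)\<^sup>2 * c"
      by (simp add: D_def)
    ultimately show ?thesis
      using norm_triangle_ineq[of "- (J + 1 / c)" "(complex_of_real m)\<^sup>2 * c"] J
      by (simp only: norm_minus_cancel)
  qed
  ultimately have "cmod (2 * beta m \<alpha> c * (c * J) - 2 * D) \<le> 4 * L + 5"
    using norm_triangle_ineq4[of "2 * beta m \<alpha> c * (c * J)" "2 * D"] by (simp add: norm_mult)
  then show ?thesis
    by (simp only: D_def)
qed

lemma norm_derivative_at_0_estimate:
  assumes \<alpha>: "0 \<le> \<alpha>" "\<alpha> \<le> 1" and "c \<noteq> 0" and J: "cmod (J + 1 / c) \<le> L"
  shows "cmod (slope_correction m \<alpha> c J) \<le> \<alpha> * (1 + 40 / (1 - m\<^sup>2) + 32 / (1 - m\<^sup>2) * L)"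
proof -
  define b F where "b = beta m \<alpha> c"
    and "F = 2 * beta m \<alpha> c * (c * J) - 2 * (- 1 / c - J + (complex_of_real m)\<^sup>2 * c)"
  have b: "cmod b \<le> 2 * \<alpha>"
    using norm_beta_le[OF \<alpha>(1)] by (simp add: b_def)
  have "0 \<le> L"
    using J norm_ge_zero order_trans by blast
  then have "cmod (b * (F * plus_tail_at_0 m c)) \<le> 2 * \<alpha> * ((4 * L + 5) * (4 / (1 - m\<^sup>2)))"
    unfolding norm_mult F_def using b norm_slope_factor_le[OF assms] norm_plus_tail_at_0_le \<alpha>
    by (intro mult_mono) auto
  moreover have "cmod (b * c) \<le> 2 * \<alpha> * (1/2)"
    unfolding norm_mult using b c \<alpha> by (intro mult_mono) auto
  ultimately have "cmod (b * c + b * (F * plus_tail_at_0 m c))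
      \<le> 2 * \<alpha> * (1/2) + 2 * \<alpha> * ((4 * L + 5) * (4 / (1 - m\<^sup>2)))"
    using norm_triangle_ineq[of "b * c" "b * (F * plus_tail_at_0 m c)"] by linarith
  also have "\<dots> = \<alpha> * (1 + 40 / (1 - m\<^sup>2) + 32 / (1 - m\<^sup>2) * L)"
  proof -
    have "2 * \<alpha> * (1/2) + 2 * \<alpha> * ((4 * L + 5) * (4 / q)) = \<alpha> * (1 + 40 / q + 32 / q * L)" if "q > 0" for q
      using that by (simp add: field_simps)
    then show ?thesis
      using one_minus_m_sq_pos .
  qed
  finally show ?thesis
    by (simp only: b_def F_def slope_correction_def)
qed

end

end

locale shear_profile =
  fixes m :: real and U U1 U2 U3 :: "real \<Rightarrow> real"
  assumes m_pos: "0 < m" and m_less_1: "m < 1" and P: "propP m U U1 U2 U3"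
begin

lemma one_minus_m_sq: "0 < 1 - m\<^sup>2"
  using one_minus_m_sq_pos m_pos m_less_1 .

lemma U_deriv: "Y \<ge> 0 \<Longrightarrow> (U has_real_derivative U1 Y) (at Y within {0..})"
  and U1_deriv: "Y \<ge> 0 \<Longrightarrow> (U1 has_real_derivative U2 Y) (at Y within {0..})"
  and U2_deriv: "Y \<ge> 0 \<Longrightarrow> (U2 has_real_derivative U3 Y) (at Y within {0..})"
  and U_0: "U 0 = 0" and U1_0: "U1 0 = 1" and U_pos: "Y > 0 \<Longrightarrow> U Y > 0"
  and U_tendsto: "(U \<longlongrightarrow> 1) at_top"
  and U1_exp_bounds: "\<exists>s0 s1 s2. s0 > 0 \<and> s1 > 0 \<and> s2 > 0 \<and>
        (\<forall>Y\<ge>0. s1 * exp (- s0 * Y) \<le> U1 Y \<and> U1 Y \<le> s2 * exp (- s0 * Y))"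
  using P by (auto simp: propP_def)

lemma continuous_on_U: "continuous_on {0..} U"
  and continuous_on_U1: "continuous_on {0..} U1"
  and continuous_on_U2: "continuous_on {0..} U2"
  using U_deriv U1_deriv U2_deriv
  by (auto intro!: continuous_on_vector_derivative simp: has_real_derivative_iff_has_vector_derivative)

lemma U1_pos: "Y \<ge> 0 \<Longrightarrow> U1 Y > 0"
  using U1_exp_bounds by (smt (verit) exp_gt_zero mult_pos_pos)

lemma U1_has_integral: "0 \<le> x \<Longrightarrow> x \<le> y \<Longrightarrow> (U1 has_integral (U y - U x)) {x..y}"
  by (rule fundamental_theorem_of_calculus)
     (auto simp flip: has_real_derivative_iff_has_vector_derivative intro!: DERIV_subset[OF U_deriv])

lemma U_mono:
  assumes "0 \<le> x" "x \<le> y"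
  shows "U x \<le> U y"
  using has_integral_nonneg[OF U1_has_integral[OF assms]] U1_pos assms
  by (fastforce intro: less_imp_le)

lemma U_le_1: "0 \<le> x \<Longrightarrow> U x \<le> 1"
  by (rule tendsto_lowerbound[OF U_tendsto])
     (auto simp: eventually_at_top_linorder intro!: exI[of _ x] U_mono)

lemma U_nonneg: "0 \<le> x \<Longrightarrow> 0 \<le> U x"
  using U_mono[of 0 x] U_0 by simp

lemma U1_has_integral_Ici:
  assumes "Y \<ge> 0"
  shows "(U1 has_integral (1 - U Y)) {Y..}"
proof (rule has_integral_to_inf)
  show "U1 integrable_on {Y..y}" for y
    using assms by (auto intro!: integrable_continuous_interval continuous_on_subset[OF continuous_on_U1])
  have "\<forall>\<^sub>F y in at_top. U y - U Y = integral {Y..y} U1"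
    using U1_has_integral assms
    by (auto simp: eventually_at_top_linorder intro!: exI[of _ Y] integral_unique[symmetric])
  then show "((\<lambda>y. integral {Y..y} U1) \<longlongrightarrow> 1 - U Y) at_top"
    by (rule Lim_transform_eventually[rotated]) (intro tendsto_diff U_tendsto tendsto_const)
  show "y \<ge> Y \<Longrightarrow> 0 \<le> U1 y" for y
    using U1_pos[of y] assms by simp
qed

lemma shifted_U_has_derivative:
  "X \<ge> 0 \<Longrightarrow> ((\<lambda>X. complex_of_real (U X) - c) has_vector_derivative of_real (U1 X)) (at X within {0..})"
  using has_vector_derivative_diff[OF has_vector_derivative_of_real[OF U_deriv] has_vector_derivative_const]
  by simp

lemma norm_Acoef_ge: "Im c > 0 \<Longrightarrow> m\<^sup>2 * (Im c)\<^sup>2 \<le> cmod (Acoef m U c X)"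
  using norm_one_minus_sq_ge[of m "of_real (U X) - c"] by (simp add: Acoef_def)

lemma Acoef_nonzero: "Im c > 0 \<Longrightarrow> Acoef m U c X \<noteq> 0"
  using one_minus_sq_nonzero[of m "of_real (U X) - c"] m_pos by (simp add: Acoef_def)

lemma Ainf_nonzero: "Im c > 0 \<Longrightarrow> Ainf m c \<noteq> 0"
  using one_minus_sq_nonzero[of m "1 - c"] m_pos by (simp add: Ainf_def)

definition plus_primitive :: "complex \<Rightarrow> real \<Rightarrow> complex" where
  "plus_primitive c X = 1 / (2 * (complex_of_real m)\<^sup>2 * Acoef m U c X)"

definition plus_integrand :: "complex \<Rightarrow> real \<Rightarrow> complex" where
  "plus_integrand c X = phi_plus U c X / (Acoef m U c X)\<^sup>2 * complex_of_real (U1 X)"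

lemma plus_primitive_has_derivative:
  assumes c: "Im c > 0" and X: "X \<ge> 0"
  shows "(plus_primitive c has_vector_derivative plus_integrand c X) (at X within {0..})"
proof -
  let ?M = "complex_of_real m" and ?w = "complex_of_real (U X) - c"
  have "1 - ?M\<^sup>2 * ?w\<^sup>2 \<noteq> 0"
    using Acoef_nonzero[OF c, of X] by (simp add: Acoef_def)
  then have "((\<lambda>w. 1 / (2 * ?M\<^sup>2 * (1 - ?M\<^sup>2 * w\<^sup>2))) has_field_derivative ?w / (1 - ?M\<^sup>2 * ?w\<^sup>2)\<^sup>2)
      (at ?w within (\<lambda>X. complex_of_real (U X) - c) ` {0..})"
    using m_pos by (intro has_field_derivative_at_within[OF has_field_derivative_inv_one_minus_sq]) simp_all
  from field_vector_diff_chain_within[OF shifted_U_has_derivative[OF X] this]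
  show ?thesis
    by (simp add: o_def plus_primitive_def[abs_def] plus_integrand_def phi_plus_def Acoef_def mult.commute)
qed

lemma norm_plus_integrand_le:
  assumes c: "Im c > 0" and x: "x \<ge> 0"
  shows "cmod (plus_integrand c x) \<le> (1 + cmod c) / (m\<^sup>2 * (Im c)\<^sup>2)\<^sup>2 * U1 x"
proof -
  have pos: "m\<^sup>2 * (Im c)\<^sup>2 > 0"
    using m_pos c by simp
  have "cmod (complex_of_real (U x) - c) \<le> 1 + cmod c"
    using norm_triangle_ineq4[of "complex_of_real (U x)" c] U_le_1[OF x] U_nonneg[OF x] by simp
  moreover have "(m\<^sup>2 * (Im c)\<^sup>2)\<^sup>2 \<le> (cmod (Acoef m U c x))\<^sup>2"
    using norm_Acoef_ge[OF c, of x] pos by (intro power_mono) auto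
  ultimately have "cmod (complex_of_real (U x) - c) / (cmod (Acoef m U c x))\<^sup>2 \<le> (1 + cmod c) / (m\<^sup>2 * (Im c)\<^sup>2)\<^sup>2"
    using pos by (intro frac_le) auto
  from mult_right_mono[OF this less_imp_le[OF U1_pos[OF x]]] show ?thesis
    using U1_pos[OF x] by (simp add: plus_integrand_def phi_plus_def norm_mult norm_divide norm_power)
qed

lemma plus_primitive_tendsto:
  assumes c: "Im c > 0"
  shows "(plus_primitive c \<longlongrightarrow> 1 / (2 * (complex_of_real m)\<^sup>2 * Ainf m c)) at_top"
proof -
  have "((\<lambda>x. complex_of_real (U x)) \<longlongrightarrow> 1) at_top"
    using tendsto_of_real[OF U_tendsto, where 'a=complex] by simp
  then show ?thesis
    using Ainf_nonzero[OF c] m_pos unfolding plus_primitive_def[abs_def] Acoef_def Ainf_def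
    by (intro tendsto_intros) auto
qed

lemma integral_plus_integrand_Ici:
  assumes c: "Im c > 0" and Y: "Y \<ge> 0"
  shows "integral {Y..} (\<lambda>X. phi_plus U c X / (Acoef m U c X)\<^sup>2 * complex_of_real (U1 X))
       = 1 / (2 * (complex_of_real m)\<^sup>2 * Ainf m c) - plus_primitive c Y"
proof -
  have "(plus_integrand c has_integral (1 / (2 * (complex_of_real m)\<^sup>2 * Ainf m c) - plus_primitive c Y)) {Y..}"
  proof (rule has_integral_Ici_of_primitive[OF _ norm_plus_integrand_le[OF c]])
    show "(plus_primitive c has_vector_derivative plus_integrand c x) (at x within {Y..})" if "x \<ge> Y" for x
      using plus_primitive_has_derivative[OF c, of x] that Y
      by (auto intro: has_vector_derivative_within_subset)
    show "(\<lambda>x. (1 + cmod c) / (m\<^sup>2 * (Im c)\<^sup>2)\<^sup>2 * U1 x) integrable_on {Y..}"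
      using has_integral_mult_right[OF U1_has_integral_Ici[OF Y]] by blast
  qed (use Y plus_primitive_tendsto[OF c] in auto)
  then show ?thesis
    by (simp add: integral_unique plus_integrand_def[abs_def])
qed

definition recip_sq :: "complex \<Rightarrow> real \<Rightarrow> complex" where
  "recip_sq c t = 1 / (complex_of_real (U t) - c)\<^sup>2"

definition recip_sq_primitive :: "complex \<Rightarrow> real \<Rightarrow> complex" where
  "recip_sq_primitive c X = oint 1 X (recip_sq c)"

lemma phi_minus_eq: "phi_minus m U c X = (complex_of_real (U X) - c) * recip_sq_primitive c X
     - (complex_of_real m)\<^sup>2 * (complex_of_real (U X) - c) * complex_of_real X"
  by (simp add: phi_minus_def recip_sq_primitive_def recip_sq_def[abs_def])

lemma continuous_on_recip_sq: "Im c > 0 \<Longrightarrow> continuous_on {0..} (recip_sq c)"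
  unfolding recip_sq_def using continuous_on_U of_real_minus_nonzero by (intro continuous_intros) auto

lemma recip_sq_integrable: "Im c > 0 \<Longrightarrow> 0 \<le> a \<Longrightarrow> recip_sq c integrable_on {a..b}"
  by (rule integrable_continuous_interval, rule continuous_on_subset[OF continuous_on_recip_sq]) auto

lemma recip_sq_primitive_eq:
  assumes c: "Im c > 0" and X: "X \<ge> 0"
  shows "recip_sq_primitive c X = integral {0..X} (recip_sq c) - integral {0..1} (recip_sq c)"
proof (cases "1 \<le> X")
  case True
  have "integral {0..1} (recip_sq c) + integral {1..X} (recip_sq c) = integral {0..X} (recip_sq c)"
    using True recip_sq_integrable[OF c, of 0 X] by (intro Henstock_Kurzweil_Integration.integral_combine) auto
  then show ?thesis
    using True by (auto simp: recip_sq_primitive_def oint_def eq_diff_eq add.commute)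
next
  case False
  have "integral {0..X} (recip_sq c) + integral {X..1} (recip_sq c) = integral {0..1} (recip_sq c)"
    using False X recip_sq_integrable[OF c, of 0 1] by (intro Henstock_Kurzweil_Integration.integral_combine) auto
  then show ?thesis
    using False by (auto simp: recip_sq_primitive_def oint_def algebra_simps)
qed

lemma recip_sq_primitive_at_0: "recip_sq_primitive c 0 = - integral {0..1} (recip_sq c)"
  by (simp add: recip_sq_primitive_def oint_def)

lemma recip_sq_primitive_has_derivative:
  assumes c: "Im c > 0" and X: "0 \<le> X" "X \<le> Y"
  shows "(recip_sq_primitive c has_vector_derivative recip_sq c X) (at X within {0..Y})"
proof -
  have "((\<lambda>u. integral {0..u} (recip_sq c)) has_vector_derivative recip_sq c X) (at X within {0..Y})"
    using X continuous_on_subset[OF continuous_on_recip_sq[OF c]] by (intro integral_has_vector_derivative) auto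
  then have "((\<lambda>u. integral {0..u} (recip_sq c) - integral {0..1} (recip_sq c)) has_vector_derivative recip_sq c X)
      (at X within {0..Y})"
    using has_vector_derivative_diff[OF _ has_vector_derivative_const] by fastforce
  then show ?thesis
    by (rule has_vector_derivative_transform[rotated 2]) (use X recip_sq_primitive_eq[OF c] in auto)
qed

lemma continuous_on_plus_integrand: "Im c > 0 \<Longrightarrow> continuous_on {0..} (plus_integrand c)"
  unfolding plus_integrand_def phi_plus_def Acoef_def
  using continuous_on_U continuous_on_U1 Acoef_nonzero unfolding Acoef_def
  by (intro continuous_intros) auto

lemma continuous_on_plus_primitive: "Im c > 0 \<Longrightarrow> continuous_on {0..} (plus_primitive c)"
  unfolding plus_primitive_def
  using continuous_on_U Acoef_nonzero m_pos unfolding Acoef_def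
  by (intro continuous_intros) auto

lemma integral_minus_integrand:
  assumes c: "Im c > 0" and Y: "Y \<ge> 0"
  shows "integral {0..Y} (\<lambda>X. phi_minus m U c X / (Acoef m U c X)\<^sup>2 * complex_of_real (U1 X))
    = plus_primitive c Y * recip_sq_primitive c Y - plus_primitive c 0 * recip_sq_primitive c 0
      - integral {0..Y} (\<lambda>X. plus_primitive c X * recip_sq c X)
      - (complex_of_real m)\<^sup>2 * integral {0..Y} (\<lambda>X. complex_of_real X * plus_integrand c X)"
proof -
  let ?K = "plus_primitive c" and ?G = "recip_sq_primitive c"
  have "((\<lambda>X. ?K X * recip_sq c X + plus_integrand c X * ?G X) has_integral (?K Y * ?G Y - ?K 0 * ?G 0)) {0..Y}"
  proof (rule fundamental_theorem_of_calculus[OF Y])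
    fix X assume X: "X \<in> {0..Y}"
    have "(?K has_vector_derivative plus_integrand c X) (at X within {0..Y})"
      using plus_primitive_has_derivative[OF c, of X] X by (auto intro: has_vector_derivative_within_subset)
    from has_vector_derivative_mult[OF this recip_sq_primitive_has_derivative[OF c]] X
    show "((\<lambda>X. ?K X * ?G X) has_vector_derivative ?K X * recip_sq c X + plus_integrand c X * ?G X)
        (at X within {0..Y})"
      by auto
  qed
  moreover have "(\<lambda>X. ?K X * recip_sq c X) integrable_on {0..Y}"
    using continuous_on_plus_primitive[OF c] continuous_on_recip_sq[OF c]
    by (intro integrable_continuous_interval continuous_intros) (auto intro: continuous_on_subset)
  moreover have "(\<lambda>X. complex_of_real X * plus_integrand c X) integrable_on {0..Y}"
    using continuous_on_plus_integrand[OF c]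
    by (intro integrable_continuous_interval continuous_intros) (auto intro: continuous_on_subset)
  ultimately have "((\<lambda>X. (?K X * recip_sq c X + plus_integrand c X * ?G X) - ?K X * recip_sq c X
        - (complex_of_real m)\<^sup>2 * (complex_of_real X * plus_integrand c X))
      has_integral (?K Y * ?G Y - ?K 0 * ?G 0 - integral {0..Y} (\<lambda>X. ?K X * recip_sq c X)
        - (complex_of_real m)\<^sup>2 * integral {0..Y} (\<lambda>X. complex_of_real X * plus_integrand c X))) {0..Y}"
    by (intro has_integral_diff has_integral_mult_right integrable_integral)
  moreover have "phi_minus m U c X / (Acoef m U c X)\<^sup>2 * complex_of_real (U1 X) =
      (?K X * recip_sq c X + plus_integrand c X * ?G X) - ?K X * recip_sq c X
        - (complex_of_real m)\<^sup>2 * (complex_of_real X * plus_integrand c X)" for X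
    by (simp add: phi_minus_eq plus_integrand_def phi_plus_def divide_inverse algebra_simps)
  ultimately show ?thesis
    by (simp add: integral_unique)
qed

lemma holomorphic_integral_recip_sq:
  "X \<ge> 0 \<Longrightarrow> (\<lambda>c. integral {0..X} (recip_sq c)) holomorphic_on {c. Im c > 0}"
  by (rule holomorphic_on_integral_shift_upper[where h="\<lambda>w. 1 / w\<^sup>2" and u=U and v="\<lambda>_. 1"])
     (auto intro!: holomorphic_intros continuous_on_subset[OF continuous_on_U] simp: recip_sq_def)

lemma holomorphic_plus_primitive: "(\<lambda>c. plus_primitive c X) holomorphic_on {c. Im c > 0}"
  unfolding plus_primitive_def Acoef_def
  using Acoef_nonzero m_pos unfolding Acoef_def by (intro holomorphic_intros) auto

lemma holomorphic_integral_plus_primitive_recip_sq: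
  "Y \<ge> 0 \<Longrightarrow> (\<lambda>c. integral {0..Y} (\<lambda>X. plus_primitive c X * recip_sq c X)) holomorphic_on {c. Im c > 0}"
  by (rule holomorphic_on_integral_shift_upper
        [where h="\<lambda>w. 1 / (2 * (complex_of_real m)\<^sup>2 * (1 - (complex_of_real m)\<^sup>2 * w\<^sup>2)) * (1 / w\<^sup>2)"
         and u=U and v="\<lambda>_. 1"])
     (use m_pos one_minus_sq_nonzero[of m] in
       \<open>auto intro!: holomorphic_intros continuous_on_subset[OF continuous_on_U]
             simp: recip_sq_def plus_primitive_def Acoef_def\<close>)

lemma holomorphic_integral_weighted_plus_integrand:
  "Y \<ge> 0 \<Longrightarrow> (\<lambda>c. integral {0..Y} (\<lambda>X. complex_of_real X * plus_integrand c X)) holomorphic_on {c. Im c > 0}"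
  by (rule holomorphic_on_integral_shift_upper
        [where h="\<lambda>w. w / (1 - (complex_of_real m)\<^sup>2 * w\<^sup>2)\<^sup>2" and u=U and v="\<lambda>t. t * U1 t"])
     (use m_pos one_minus_sq_nonzero[of m] in
       \<open>auto intro!: holomorphic_intros continuous_intros continuous_on_subset[OF continuous_on_U]
             continuous_on_subset[OF continuous_on_U1] simp: plus_integrand_def phi_plus_def Acoef_def\<close>)

lemma Ainf_not_nonpos_Real:
  assumes c: "Im c > 0"
  shows "Ainf m c \<notin> \<real>\<^sub>\<le>\<^sub>0"
proof
  assume "Ainf m c \<in> \<real>\<^sub>\<le>\<^sub>0"
  then have "Im (Ainf m c) = 0" and re: "Re (Ainf m c) \<le> 0"
    by (auto simp: complex_nonpos_Reals_iff)
  moreover have "Im (Ainf m c) = 2 * m\<^sup>2 * (1 - Re c) * Im c"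
    by (simp add: Ainf_def power2_eq_square algebra_simps)
  ultimately have "Re c = 1"
    using c m_pos by simp
  then have "Re (Ainf m c) = 1 + m\<^sup>2 * (Im c)\<^sup>2"
    by (simp add: Ainf_def power2_eq_square algebra_simps)
  with re show False
    by (smt (verit) zero_le_power2 mult_nonneg_nonneg)
qed

lemma holomorphic_Ainf: "Ainf m holomorphic_on S"
  unfolding Ainf_def[abs_def] by (intro holomorphic_intros)

lemma holomorphic_beta: "(\<lambda>c. beta m \<alpha> c) holomorphic_on {c. Im c > 0}"
  unfolding beta_def using Ainf_not_nonpos_Real holomorphic_Ainf
  by (intro holomorphic_intros) auto

lemma holomorphic_Phi_app:
  assumes Y: "Y \<ge> 0"
  shows "(\<lambda>c. Phi_app m U U1 \<alpha> c Y) holomorphic_on {c. Im c > 0}"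
proof -
  define I where "I c X = integral {0..X} (recip_sq c)" for c X
  define E where "E c = exp (- beta m \<alpha> c * complex_of_real Y)" for c
  \<comment> \<open>\<open>\<Phi>\<^sub>a\<^sub>p\<^sub>p\<close> after rewriting both integrals of \<open>\<phi>\<^sub>1\<close> with the two primitives\<close>
  define F where "F c = E c * (of_real (U Y) - c) + beta m \<alpha> c * (
     - 2 * E c * (of_real (U Y) - c) *
        (plus_primitive c Y * (I c Y - I c 1) - plus_primitive c 0 * (I c 0 - I c 1)
         - integral {0..Y} (\<lambda>X. plus_primitive c X * recip_sq c X)
         - (complex_of_real m)\<^sup>2 * integral {0..Y} (\<lambda>X. complex_of_real X * plus_integrand c X))
     - 2 * E c * ((of_real (U Y) - c) * (I c Y - I c 1) - (complex_of_real m)\<^sup>2 * (of_real (U Y) - c) * of_real Y)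
        * (1 / (2 * (complex_of_real m)\<^sup>2 * Ainf m c) - plus_primitive c Y))" for c
  have "F holomorphic_on {c. Im c > 0}"
    unfolding F_def E_def I_def using Ainf_nonzero m_pos
    by (intro holomorphic_intros holomorphic_integral_recip_sq holomorphic_plus_primitive
          holomorphic_integral_plus_primitive_recip_sq holomorphic_integral_weighted_plus_integrand
          holomorphic_beta holomorphic_Ainf Y order.refl zero_le_one) auto
  moreover have "F c = Phi_app m U U1 \<alpha> c Y" if "Im c > 0" for c
    using that Y recip_sq_primitive_eq[OF that]
    unfolding Phi_app_def phi1_def integral_minus_integrand[OF that Y] integral_plus_integrand_Ici[OF that Y]
    by (simp add: F_def E_def I_def phi_minus_eq phi_plus_def)
  ultimately show ?thesis
    by (rule holomorphic_transform) simp
qed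

lemma U1_ge_on_unit_interval: "\<exists>k>0. \<forall>X\<in>{0..1}. k \<le> U1 X"
proof -
  obtain s0 s1 s2 where s: "s0 > 0" "s1 > 0" "\<forall>Y\<ge>0. s1 * exp (- s0 * Y) \<le> U1 Y"
    using U1_exp_bounds by blast
  have "s1 * exp (- s0) \<le> U1 X" if "X \<in> {0..1}" for X
  proof -
    have "exp (- s0) \<le> exp (- s0 * X)"
      using that s by (simp add: mult_left_le)
    then show ?thesis
      using s that by (smt (verit) atLeastAtMost_iff mult_left_mono)
  qed
  then show ?thesis
    using s by (intro exI[of _ "s1 * exp (- s0)"]) auto
qed

lemma U2_bounded_on_unit_interval: "\<exists>M>0. \<forall>X\<in>{0..1}. \<bar>U2 X\<bar> \<le> M"
proof -
  have "bounded (U2 ` {0..1})"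
    by (intro compact_imp_bounded compact_continuous_image continuous_on_subset[OF continuous_on_U2]) auto
  then show ?thesis
    by (auto simp: bounded_pos)
qed

definition recip_sq_remainder :: "complex \<Rightarrow> real \<Rightarrow> complex" where
  "recip_sq_remainder c X = complex_of_real (U2 X) / ((complex_of_real (U1 X))\<^sup>2 * (complex_of_real (U X) - c))"

lemma inv_U1_shifted_has_derivative:
  assumes c: "Im c > 0" and X: "X \<ge> 0"
  shows "((\<lambda>X. -1 / (complex_of_real (U1 X) * (complex_of_real (U X) - c))) has_vector_derivative
          recip_sq_remainder c X + recip_sq c X) (at X within {0..})"
proof -
  let ?u1 = "complex_of_real (U1 X)" and ?w = "complex_of_real (U X) - c"
  define a where "a X = complex_of_real (U1 X) * (complex_of_real (U X) - c)" for X
  have nonzero: "?u1 \<noteq> 0" "?w \<noteq> 0"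
    using U1_pos[OF X] of_real_minus_nonzero[OF c] by auto
  have "(a has_vector_derivative ?u1 * ?u1 + of_real (U2 X) * ?w) (at X within {0..})"
    unfolding a_def
    by (rule has_vector_derivative_mult[OF has_vector_derivative_of_real[OF U1_deriv[OF X]]
          shifted_U_has_derivative[OF X]])
  moreover have "((\<lambda>z. -1 / z) has_field_derivative 1 / (a X)\<^sup>2) (at (a X) within a ` {0..})"
    using nonzero by (auto intro!: derivative_eq_intros simp: a_def power2_eq_square field_simps)
  ultimately have "((\<lambda>z. -1 / z) \<circ> a has_vector_derivative (?u1 * ?u1 + of_real (U2 X) * ?w) * (1 / (a X)\<^sup>2))
      (at X within {0..})"
    by (rule field_vector_diff_chain_within)
  moreover have "(p * p + q * w) * (1 / (p * w)\<^sup>2) = q / (p\<^sup>2 * w) + 1 / w\<^sup>2"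
    if "p \<noteq> 0" "w \<noteq> 0" for p q w :: complex
    using that by (simp add: field_simps power2_eq_square)
  then have "(?u1 * ?u1 + of_real (U2 X) * ?w) * (1 / (a X)\<^sup>2) = recip_sq_remainder c X + recip_sq c X"
    using nonzero by (simp add: a_def recip_sq_remainder_def recip_sq_def)
  ultimately show ?thesis
    by (simp add: a_def o_def)
qed

lemma recip_sq_remainder_integrable: "Im c > 0 \<Longrightarrow> recip_sq_remainder c integrable_on {0..1}"
  unfolding recip_sq_remainder_def using of_real_minus_nonzero U1_pos
  by (intro integrable_continuous_interval continuous_intros continuous_on_subset[OF continuous_on_U2]
        continuous_on_subset[OF continuous_on_U1] continuous_on_subset[OF continuous_on_U]) force+

lemma integral_recip_sq_plus_inv:
  assumes c: "Im c > 0"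
  shows "integral {0..1} (recip_sq c) + 1 / c
       = -1 / (complex_of_real (U1 1) * (complex_of_real (U 1) - c)) - integral {0..1} (recip_sq_remainder c)"
proof -
  have "((\<lambda>X. recip_sq_remainder c X + recip_sq c X) has_integral
      -1 / (complex_of_real (U1 1) * (complex_of_real (U 1) - c)) - 1 / c) {0..1}"
    using fundamental_theorem_of_calculus[of 0 1, OF _ has_vector_derivative_within_subset
        [OF inv_U1_shifted_has_derivative[OF c]]] U_0 U1_0
    by auto
  moreover note recip_sq_remainder_integrable[OF c]
  ultimately have "((\<lambda>X. recip_sq_remainder c X + recip_sq c X - recip_sq_remainder c X) has_integral
      -1 / (complex_of_real (U1 1) * (complex_of_real (U 1) - c)) - 1 / c - integral {0..1} (recip_sq_remainder c)) {0..1}"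
    by (intro has_integral_diff integrable_integral)
  then show ?thesis
    by (simp add: integral_unique)
qed

lemma U1_div_dist_has_integral:
  assumes c: "Im c > 0"
  shows "((\<lambda>X. U1 X / cmod (complex_of_real (U X) - c)) has_integral
          (arsinh ((U 1 - Re c) / Im c) - arsinh ((U 0 - Re c) / Im c))) {0..1}"
proof (rule fundamental_theorem_of_calculus)
  fix X :: real assume X: "X \<in> {0..1}"
  define a b where "a = Re c" and "b = Im c"
  have "((\<lambda>X. (U X - a) / b) has_real_derivative U1 X / b) (at X within {0..1})"
    using U_deriv[of X] X c unfolding b_def by (auto intro!: derivative_eq_intros intro: DERIV_subset)
  from DERIV_chain'[OF this arsinh_real_has_field_derivative]
  have "((\<lambda>X. arsinh ((U X - a) / b)) has_real_derivative
      1 / sqrt (((U X - a) / b)\<^sup>2 + 1) * (U1 X / b)) (at X within {0..1})" .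
  moreover have "1 / sqrt (((U X - a) / b)\<^sup>2 + 1) * (U1 X / b) = U1 X / cmod (complex_of_real (U X) - c)"
  proof -
    have "((U X - a) / b)\<^sup>2 + 1 = ((U X - a)\<^sup>2 + b\<^sup>2) / b\<^sup>2"
      using c by (simp add: b_def field_simps power2_eq_square)
    then have "sqrt (((U X - a) / b)\<^sup>2 + 1) = sqrt ((U X - a)\<^sup>2 + b\<^sup>2) / b"
      using c by (simp add: b_def real_sqrt_divide)
    moreover have "sqrt ((U X - a)\<^sup>2 + b\<^sup>2) > 0"
      using c by (simp add: b_def add_nonneg_pos)
    ultimately show ?thesis
      using c by (simp add: cmod_def a_def b_def field_simps)
  qed
  ultimately have "((\<lambda>X. arsinh ((U X - a) / b)) has_real_derivative
      U1 X / cmod (complex_of_real (U X) - c)) (at X within {0..1})"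
    by (rule DERIV_cong)
  then show "((\<lambda>X. arsinh ((U X - Re c) / Im c)) has_vector_derivative
      U1 X / cmod (complex_of_real (U X) - c)) (at X within {0..1})"
    by (simp add: a_def b_def has_real_derivative_iff_has_vector_derivative)
qed simp

lemma norm_integral_recip_sq_remainder_le:
  assumes c: "Im c > 0" and k: "k > 0" "\<forall>X\<in>{0..1}. k \<le> U1 X" and M: "\<forall>X\<in>{0..1}. \<bar>U2 X\<bar> \<le> M"
  shows "cmod (integral {0..1} (recip_sq_remainder c))
       \<le> M / k^3 * (arsinh ((U 1 - Re c) / Im c) - arsinh ((U 0 - Re c) / Im c))"
proof -
  note arsinh_integral = has_integral_mult_right[OF U1_div_dist_has_integral[OF c], of "M / k^3"]
  have "norm (recip_sq_remainder c X) \<le> M / k^3 * (U1 X / cmod (complex_of_real (U X) - c))"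
    if X: "X \<in> {0..1}" for X
  proof -
    define d where "d = cmod (complex_of_real (U X) - c)"
    have d: "d > 0"
      using of_real_minus_nonzero[OF c] by (simp add: d_def)
    have kX: "k \<le> U1 X" and MX: "\<bar>U2 X\<bar> \<le> M"
      using k M X by auto
    have "norm (recip_sq_remainder c X) = \<bar>U2 X\<bar> / ((U1 X)\<^sup>2 * d)"
      by (simp add: recip_sq_remainder_def d_def norm_divide norm_mult norm_power)
    also have "\<dots> \<le> M / (k\<^sup>2 * d)"
      using MX kX k d by (intro frac_le mult_right_mono power_mono) auto
    also have "\<dots> = M * k / (k^3 * d)"
      using k d by (simp add: field_simps power2_eq_square power3_eq_cube)
    also have "\<dots> \<le> M * U1 X / (k^3 * d)"
      using kX MX k d by (intro divide_right_mono mult_left_mono) auto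
    finally show ?thesis
      by (simp add: d_def)
  qed
  then have "cmod (integral {0..1} (recip_sq_remainder c))
      \<le> integral {0..1} (\<lambda>X. M / k^3 * (U1 X / cmod (complex_of_real (U X) - c)))"
    using arsinh_integral recip_sq_remainder_integrable[OF c]
    by (intro integral_norm_bound_integral) auto
  then show ?thesis
    using integral_unique[OF arsinh_integral] by simp
qed

lemma norm_boundary_term_le:
  assumes k: "0 < k" "k \<le> U1 1" and c: "cmod c < U 1 / 2"
  shows "cmod (-1 / (complex_of_real (U1 1) * (complex_of_real (U 1) - c))) \<le> 2 / (k * U 1)"
proof -
  have U_1: "0 < U 1"
    using U_pos[of 1] by simp
  have "U 1 / 2 \<le> cmod (complex_of_real (U 1) - c)"
    using norm_triangle_ineq2[of "complex_of_real (U 1)" c] c U_1 by simp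
  then have "1 / (U1 1 * cmod (complex_of_real (U 1) - c)) \<le> 1 / (k * (U 1 / 2))"
    using k U_1 by (intro divide_left_mono mult_mono mult_pos_pos) auto
  then show ?thesis
    using U1_pos[of 1] by (simp add: norm_divide norm_mult)
qed

lemma integral_recip_sq_asymptotics:
  "\<exists>L. \<forall>c. Im c > 0 \<and> cmod c < 1/2 \<and> cmod c < U 1 / 2 \<longrightarrow>
         cmod (integral {0..1} (recip_sq c) + 1 / c) \<le> L * \<bar>ln (Im c)\<bar>"
proof -
  obtain k where k: "k > 0" "\<forall>X\<in>{0..1}. k \<le> U1 X"
    using U1_ge_on_unit_interval by blast
  obtain M where M: "M > 0" "\<forall>X\<in>{0..1}. \<bar>U2 X\<bar> \<le> M"
    using U2_bounded_on_unit_interval by blast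
  have U_1: "0 < U 1" "U 1 \<le> 1"
    using U_pos[of 1] U_le_1[of 1] by simp_all
  show ?thesis
  proof (intro exI[of _ "2 / (k * U 1 * ln 2) + 8 * M / k^3"] allI impI)
    fix c assume "Im c > 0 \<and> cmod c < 1/2 \<and> cmod c < U 1 / 2"
    then have c: "Im c > 0" "cmod c < 1/2" "cmod c < U 1 / 2"
      by auto
    have Im_c: "Im c < 1/2" and Re_c: "\<bar>Re c\<bar> < 1/2"
      using abs_Im_le_cmod[of c] abs_Re_le_cmod[of c] c by auto
    define l where "l = \<bar>ln (Im c)\<bar>"
    have l: "ln 2 \<le> l"
      unfolding l_def using ln_two_le_abs_ln[OF c(1) Im_c] .
    have "cmod (-1 / (complex_of_real (U1 1) * (complex_of_real (U 1) - c))) \<le> 2 / (k * U 1)"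
      using norm_boundary_term_le[OF k(1) _ c(3)] k(2) by simp
    also have "\<dots> \<le> 2 / (k * U 1 * ln 2) * l"
      using l k U_1 by (simp add: field_simps)
    finally have boundary: "cmod (-1 / (complex_of_real (U1 1) * (complex_of_real (U 1) - c)))
        \<le> 2 / (k * U 1 * ln 2) * l" .
    have "cmod (integral {0..1} (recip_sq_remainder c))
        \<le> M / k^3 * (arsinh ((U 1 - Re c) / Im c) - arsinh ((U 0 - Re c) / Im c))"
      using norm_integral_recip_sq_remainder_le[OF c(1) k M(2)] .
    also have "\<dots> \<le> M / k^3 * (8 * l)"
      using arsinh_diff_le_log[OF Re_c c(1) Im_c, of "U 1"] U_1 U_0 k M
      by (intro mult_left_mono) (auto simp: l_def)
    finally have remainder: "cmod (integral {0..1} (recip_sq_remainder c)) \<le> 8 * M / k^3 * l"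
      by (simp add: mult.commute mult.left_commute)
    show "cmod (integral {0..1} (recip_sq c) + 1 / c) \<le> (2 / (k * U 1 * ln 2) + 8 * M / k^3) * \<bar>ln (Im c)\<bar>"
      using norm_triangle_ineq4[of "-1 / (complex_of_real (U1 1) * (complex_of_real (U 1) - c))"
          "integral {0..1} (recip_sq_remainder c)"] boundary remainder
      unfolding integral_recip_sq_plus_inv[OF c(1)] l_def by (simp add: distrib_right)
  qed
qed

lemma phi_minus_at_0: "phi_minus m U c 0 = c * integral {0..1} (recip_sq c)"
  by (simp add: phi_minus_eq recip_sq_primitive_at_0 U_0)

lemma phi_minus_has_derivative_at_0:
  assumes c: "Im c > 0"
  shows "(phi_minus m U c has_vector_derivative
           - 1 / c - integral {0..1} (recip_sq c) + (complex_of_real m)\<^sup>2 * c) (at 0 within {0..1})"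
proof -
  have "c \<noteq> 0"
    using c by auto
  have u: "((\<lambda>X. complex_of_real (U X) - c) has_vector_derivative 1) (at 0 within {0..1})"
    using has_vector_derivative_within_subset[OF shifted_U_has_derivative[of 0 c]] U1_0 by auto
  have "((\<lambda>Y. complex_of_real Y) has_vector_derivative 1) (at 0 within {0..1})"
    using has_vector_derivative_of_real[OF DERIV_ident] by simp
  from has_vector_derivative_diff[OF has_vector_derivative_mult[OF u recip_sq_primitive_has_derivative[OF c]]
      has_vector_derivative_mult[OF has_vector_derivative_mult_right[OF u, of "(complex_of_real m)\<^sup>2"] this]]
  have "(phi_minus m U c has_vector_derivative
      (- c) * recip_sq c 0 + 1 * recip_sq_primitive c 0 - ((complex_of_real m)\<^sup>2 * (- c) * 1 + (complex_of_real m)\<^sup>2 * 1 * 0))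
      (at 0 within {0..1})"
    by (simp add: phi_minus_eq[abs_def] U_0)
  moreover have "(- c) * recip_sq c 0 + 1 * recip_sq_primitive c 0 - ((complex_of_real m)\<^sup>2 * (- c) * 1 + (complex_of_real m)\<^sup>2 * 1 * 0)
      = - 1 / c - integral {0..1} (recip_sq c) + (complex_of_real m)\<^sup>2 * c"
    using \<open>c \<noteq> 0\<close> by (simp add: U_0 recip_sq_def recip_sq_primitive_at_0 power2_eq_square field_simps)
  ultimately show ?thesis
    by simp
qed

lemma integral_minus_integrand_has_derivative_at_0:
  assumes c: "Im c > 0"
  shows "((\<lambda>Y. integral {0..Y} (\<lambda>X. phi_minus m U c X / (Acoef m U c X)\<^sup>2 * complex_of_real (U1 X)))
      has_vector_derivative c * integral {0..1} (recip_sq c) / (Acoef m U c 0)\<^sup>2) (at 0 within {0..1})"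
proof -
  have "continuous_on {0..1} (recip_sq_primitive c)"
    using recip_sq_primitive_has_derivative[OF c] by (intro continuous_on_vector_derivative) auto
  then have "continuous_on {0..1} (\<lambda>X. phi_minus m U c X / (Acoef m U c X)\<^sup>2 * complex_of_real (U1 X))"
    unfolding phi_minus_eq Acoef_def using Acoef_nonzero[OF c] unfolding Acoef_def
    by (intro continuous_intros continuous_on_subset[OF continuous_on_U] continuous_on_subset[OF continuous_on_U1]) auto
  from integral_has_vector_derivative[OF this, of 0]
  show ?thesis
    by (simp add: phi_minus_at_0 U1_0)
qed

lemma integral_plus_integrand_Ici_has_derivative_at_0:
  assumes c: "Im c > 0"
  shows "((\<lambda>Y. integral {Y..} (\<lambda>X. phi_plus U c X / (Acoef m U c X)\<^sup>2 * complex_of_real (U1 X)))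
      has_vector_derivative c / (Acoef m U c 0)\<^sup>2) (at 0 within {0..1})"
proof -
  have "((\<lambda>Y. 1 / (2 * (complex_of_real m)\<^sup>2 * Ainf m c) - plus_primitive c Y) has_vector_derivative
      0 - plus_integrand c 0) (at 0 within {0..1})"
    by (intro has_vector_derivative_diff has_vector_derivative_const
          has_vector_derivative_within_subset[OF plus_primitive_has_derivative[OF c]]) auto
  then have "((\<lambda>Y. 1 / (2 * (complex_of_real m)\<^sup>2 * Ainf m c) - plus_primitive c Y) has_vector_derivative
      c / (Acoef m U c 0)\<^sup>2) (at 0 within {0..1})"
    by (simp add: U_0 U1_0 plus_integrand_def phi_plus_def)
  then show ?thesis
    by (rule has_vector_derivative_transform[rotated 2]) (use integral_plus_integrand_Ici[OF c] in auto)
qed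

lemma plus_tail_at_0_eq:
  assumes c: "Im c > 0"
  shows "1 / (2 * (complex_of_real m)\<^sup>2 * Ainf m c) - plus_primitive c 0 = plus_tail_at_0 m c"
proof -
  define M A0 where "M = complex_of_real m" and "A0 = 1 - M\<^sup>2 * c\<^sup>2"
  have nonzero: "Ainf m c \<noteq> 0" "A0 \<noteq> 0" "M \<noteq> 0"
    using Ainf_nonzero[OF c] Acoef_nonzero[OF c, of 0] m_pos by (simp_all add: M_def A0_def Acoef_def U_0)
  have diff: "A0 - Ainf m c = M\<^sup>2 * (1 - 2 * c)"
    by (simp add: M_def A0_def Ainf_def power2_eq_square algebra_simps)
  have "1 / (2 * M\<^sup>2 * Ainf m c) - 1 / (2 * M\<^sup>2 * A0) = (A0 - Ainf m c) / (2 * M\<^sup>2 * Ainf m c * A0)"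
    using nonzero by (simp add: field_simps)
  also have "\<dots> = (1 - 2 * c) / (2 * Ainf m c * A0)"
    unfolding diff using nonzero by (simp add: field_simps)
  finally show ?thesis
    by (simp add: plus_primitive_def Acoef_def plus_tail_at_0_def U_0 M_def A0_def)
qed

lemma Phi_app_at_0:
  assumes c: "Im c > 0"
  shows "Phi_app m U U1 \<alpha> c 0 = - c - 2 * beta m \<alpha> c * (c * integral {0..1} (recip_sq c)) * plus_tail_at_0 m c"
  unfolding Phi_app_def phi1_def integral_plus_integrand_Ici[OF c order.refl] phi_minus_at_0
    plus_tail_at_0_eq[OF c, symmetric]
  by (simp add: U_0 phi_plus_def)

lemma Phi_app_has_derivative_at_0:
  fixes \<alpha> :: real
  assumes c: "Im c > 0"
  defines "J \<equiv> integral {0..1} (recip_sq c)"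
  shows "((\<lambda>Y. Phi_app m U U1 \<alpha> c Y) has_vector_derivative 1 + slope_correction m \<alpha> c J) (at 0 within {0..})"
proof -
  define b where "b = beta m \<alpha> c"
  let ?E = "\<lambda>Y. exp (- b * complex_of_real Y)"
  have "((\<lambda>z. exp (- b * z)) has_field_derivative - b) (at (of_real 0))"
    by (auto intro!: derivative_eq_intros)
  then have E: "(?E has_vector_derivative - b) (at 0 within {0..1})"
    by (rule has_vector_derivative_real_field)
  have u: "((\<lambda>X. complex_of_real (U X) - c) has_vector_derivative 1) (at 0 within {0..1})"
    using has_vector_derivative_within_subset[OF shifted_U_has_derivative[of 0 c]] U1_0 by auto
  have "((\<lambda>Y. Phi_app m U U1 \<alpha> c Y) has_vector_derivative
      (?E 0 * 1 + (- b) * (complex_of_real (U 0) - c))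
      + b * ((-2 * ?E 0 * (complex_of_real (U 0) - c) * (c * J / (Acoef m U c 0)\<^sup>2)
              + (-2 * ?E 0 * 1 + -2 * (- b) * (complex_of_real (U 0) - c))
                * integral {0..0} (\<lambda>X. phi_minus m U c X / (Acoef m U c X)\<^sup>2 * complex_of_real (U1 X)))
           - (2 * ?E 0 * phi_minus m U c 0 * (c / (Acoef m U c 0)\<^sup>2)
              + (2 * ?E 0 * (- 1 / c - J + (complex_of_real m)\<^sup>2 * c) + 2 * (- b) * phi_minus m U c 0)
                * integral {0..} (\<lambda>X. phi_plus U c X / (Acoef m U c X)\<^sup>2 * complex_of_real (U1 X)))))
      (at 0 within {0..1})"
    unfolding Phi_app_def phi1_def phi_plus_def b_def[symmetric] J_def
    by (intro has_vector_derivative_add has_vector_derivative_diff has_vector_derivative_mult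
          has_vector_derivative_mult_right E u phi_minus_has_derivative_at_0[OF c]
          integral_minus_integrand_has_derivative_at_0[OF c]
          integral_plus_integrand_Ici_has_derivative_at_0[OF c, unfolded phi_plus_def])
  from this[unfolded integral_plus_integrand_Ici[OF c order.refl] phi_minus_at_0 U_0 plus_tail_at_0_eq[OF c],
      folded J_def]
  show ?thesis
    by (simp add: slope_correction_def b_def[symmetric] algebra_simps at_within_Icc_at_right at_within_Ici_at_right)
qed

lemma Phi_app_at_0_bounds:
  assumes \<alpha>: "0 \<le> \<alpha>" "\<alpha> \<le> 1" and c: "Im c > 0" "cmod c \<le> 1/2" "cmod c \<le> (1 - m\<^sup>2) / 6"
    and J: "cmod (integral {0..1} (recip_sq c) + 1 / c) \<le> L"
  shows "cmod (Phi_app m U U1 \<alpha> c 0 - (- c + complex_of_real (\<alpha> / sqrt (1 - m\<^sup>2))))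
      \<le> \<alpha> * cmod c * ((6 / sqrt (1 - m\<^sup>2) + 8) / (sqrt ((1 - m\<^sup>2) / 2) * sqrt (1 - m\<^sup>2)) + 16 / (1 - m\<^sup>2) * L)"
    and "\<exists>D. ((\<lambda>Y. Phi_app m U U1 \<alpha> c Y) has_vector_derivative D) (at 0 within {0..})
      \<and> cmod (D - 1) \<le> \<alpha> * (1 + 40 / (1 - m\<^sup>2) + 32 / (1 - m\<^sup>2) * L)"
proof -
  have "c \<noteq> 0"
    using c by auto
  then show "cmod (Phi_app m U U1 \<alpha> c 0 - (- c + complex_of_real (\<alpha> / sqrt (1 - m\<^sup>2))))
      \<le> \<alpha> * cmod c * ((6 / sqrt (1 - m\<^sup>2) + 8) / (sqrt ((1 - m\<^sup>2) / 2) * sqrt (1 - m\<^sup>2)) + 16 / (1 - m\<^sup>2) * L)"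
    unfolding Phi_app_at_0[OF c(1)] using norm_value_at_0_estimate[OF m_pos m_less_1 c(2,3) \<alpha>(1) _ J] by simp
  show "\<exists>D. ((\<lambda>Y. Phi_app m U U1 \<alpha> c Y) has_vector_derivative D) (at 0 within {0..})
      \<and> cmod (D - 1) \<le> \<alpha> * (1 + 40 / (1 - m\<^sup>2) + 32 / (1 - m\<^sup>2) * L)"
    using Phi_app_has_derivative_at_0[OF c(1), of \<alpha>]
      norm_derivative_at_0_estimate[OF m_pos m_less_1 c(2,3) \<alpha> \<open>c \<noteq> 0\<close> J]
    by (intro exI[of _ "1 + slope_correction m \<alpha> c (integral {0..1} (recip_sq c))"]) simp
qed

definition log_bound_const :: "real \<Rightarrow> real" where
  "log_bound_const K = ((6 / sqrt (1 - m\<^sup>2) + 8) / (sqrt ((1 - m\<^sup>2) / 2) * sqrt (1 - m\<^sup>2)) + 1 + 40 / (1 - m\<^sup>2))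
     / ln 2 + 32 / (1 - m\<^sup>2) * \<bar>K\<bar>"

lemma Phi_app_at_0_log_bounds:
  assumes \<alpha>: "0 \<le> \<alpha>" "\<alpha> \<le> 1" and c: "Im c > 0" "cmod c \<le> 1/2" "cmod c \<le> (1 - m\<^sup>2) / 6" "Im c < 1/2"
    and J: "cmod (integral {0..1} (recip_sq c) + 1 / c) \<le> K * \<bar>ln (Im c)\<bar>"
  defines "C \<equiv> log_bound_const K"
  shows "cmod (Phi_app m U U1 \<alpha> c 0 - (- c + complex_of_real (\<alpha> / sqrt (1 - m\<^sup>2))))
          \<le> C * \<alpha> * (cmod c * \<bar>ln (Im c)\<bar>)
      \<and> (\<exists>D. ((\<lambda>Y. Phi_app m U U1 \<alpha> c Y) has_vector_derivative D) (at 0 within {0..})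
             \<and> cmod (D - 1) \<le> C * \<alpha> * \<bar>ln (Im c)\<bar>)"
proof -
  define l where "l = \<bar>ln (Im c)\<bar>"
  define C0 where "C0 = (6 / sqrt (1 - m\<^sup>2) + 8) / (sqrt ((1 - m\<^sup>2) / 2) * sqrt (1 - m\<^sup>2))"
  define X where "X = C0 + 1 + 40 / (1 - m\<^sup>2)"
  have l: "1 \<le> l / ln 2"
    using ln_two_le_abs_ln[OF c(1,4)] by (simp add: l_def)
  have "K * l \<le> \<bar>K\<bar> * l"
    by (intro mult_right_mono) (auto simp: l_def)
  with J have J': "cmod (integral {0..1} (recip_sq c) + 1 / c) \<le> \<bar>K\<bar> * l"
    by (simp add: l_def)
  have "0 \<le> C0"
    using one_minus_m_sq by (simp add: C0_def)
  then have X: "C0 \<le> X" "1 + 40 / (1 - m\<^sup>2) \<le> X" "X \<le> X * (l / ln 2)"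
    using mult_left_mono[OF l, of X] one_minus_m_sq by (simp_all add: X_def)
  have "16 / (1 - m\<^sup>2) * (\<bar>K\<bar> * l) \<le> 32 / (1 - m\<^sup>2) * (\<bar>K\<bar> * l)"
    using one_minus_m_sq by (intro mult_right_mono divide_right_mono) (auto simp: l_def)
  moreover have "C = X / ln 2 + 32 / (1 - m\<^sup>2) * \<bar>K\<bar>"
    by (simp add: C_def log_bound_const_def X_def C0_def)
  then have "C * l = X * (l / ln 2) + 32 / (1 - m\<^sup>2) * (\<bar>K\<bar> * l)"
    by (simp add: algebra_simps)
  ultimately have bound_value: "C0 + 16 / (1 - m\<^sup>2) * (\<bar>K\<bar> * l) \<le> C * l"
    and bound_derivative: "1 + 40 / (1 - m\<^sup>2) + 32 / (1 - m\<^sup>2) * (\<bar>K\<bar> * l) \<le> C * l"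
    using X by linarith+
  note bounds = Phi_app_at_0_bounds[OF \<alpha> c(1-3) J', folded C0_def]
  have "cmod (Phi_app m U U1 \<alpha> c 0 - (- c + complex_of_real (\<alpha> / sqrt (1 - m\<^sup>2)))) \<le> (\<alpha> * cmod c) * (C * l)"
    using bounds(1) mult_left_mono[OF bound_value, of "\<alpha> * cmod c"] \<alpha> by simp
  moreover obtain D where "((\<lambda>Y. Phi_app m U U1 \<alpha> c Y) has_vector_derivative D) (at 0 within {0..})"
    and D_bound: "cmod (D - 1) \<le> \<alpha> * (1 + 40 / (1 - m\<^sup>2) + 32 / (1 - m\<^sup>2) * (\<bar>K\<bar> * l))"
    using bounds(2) by blast
  moreover note order_trans[OF D_bound mult_left_mono[OF bound_derivative \<alpha>(1)]]
  ultimately show ?thesis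
    by (auto simp: l_def mult_ac)
qed

lemma Phi_app_at_0_asymptotics:
  "\<exists>\<gamma>1\<in>{0<..<1::real}. \<exists>C::real. \<forall>\<alpha>\<in>{0<..<1::real}. \<forall>c.
      Im c > 0 \<and> cmod c < \<gamma>1 \<longrightarrow>
        cmod (Phi_app m U U1 \<alpha> c 0 - (- c + complex_of_real (\<alpha> / sqrt (1 - m\<^sup>2))))
          \<le> C * \<alpha> * (cmod c * \<bar>ln (Im c)\<bar>)
      \<and> (\<exists>D. ((\<lambda>Y. Phi_app m U U1 \<alpha> c Y) has_vector_derivative D) (at 0 within {0..})
             \<and> cmod (D - 1) \<le> C * \<alpha> * \<bar>ln (Im c)\<bar>)"
proof -
  obtain K where K: "\<And>c. Im c > 0 \<and> cmod c < 1/2 \<and> cmod c < U 1 / 2 \<Longrightarrow>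
      cmod (integral {0..1} (recip_sq c) + 1 / c) \<le> K * \<bar>ln (Im c)\<bar>"
    using integral_recip_sq_asymptotics by blast
  define \<gamma>1 where "\<gamma>1 = min (1/2) (min ((1 - m\<^sup>2) / 6) (U 1 / 2))"
  show ?thesis
  proof (intro bexI[of _ \<gamma>1] exI[of _ "log_bound_const K"] ballI allI impI)
    show "\<gamma>1 \<in> {0<..<1}"
      using one_minus_m_sq U_pos[of 1] by (auto simp: \<gamma>1_def)
  next
    fix \<alpha> :: real and c :: complex
    assume "\<alpha> \<in> {0<..<1}" and "Im c > 0 \<and> cmod c < \<gamma>1"
    then show "cmod (Phi_app m U U1 \<alpha> c 0 - (- c + complex_of_real (\<alpha> / sqrt (1 - m\<^sup>2))))
          \<le> log_bound_const K * \<alpha> * (cmod c * \<bar>ln (Im c)\<bar>)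
      \<and> (\<exists>D. ((\<lambda>Y. Phi_app m U U1 \<alpha> c Y) has_vector_derivative D) (at 0 within {0..})
             \<and> cmod (D - 1) \<le> log_bound_const K * \<alpha> * \<bar>ln (Im c)\<bar>)"
      using abs_Im_le_cmod[of c] K[of c]
      by (intro Phi_app_at_0_log_bounds) (auto simp: \<gamma>1_def)
  qed
qed
end

theorem lemma2p1:
  fixes m :: real and U U1 U2 U3 :: "real \<Rightarrow> real"
  assumes "0 < m" and "m < 1"
    and "propP m U U1 U2 U3"
  shows "(\<forall>\<alpha>\<in>{0<..<1}. \<forall>Y\<ge>0.
            (\<lambda>c. Phi_app m U U1 \<alpha> c Y) holomorphic_on {c. Im c > 0})
       \<and> (\<exists>\<gamma>1\<in>{0<..<1::real}. \<exists>C::real. \<forall>\<alpha>\<in>{0<..<1::real}. \<forall>c.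
            Im c > 0 \<and> cmod c < \<gamma>1 \<longrightarrow>
              cmod (Phi_app m U U1 \<alpha> c 0 - (- c + complex_of_real (\<alpha> / sqrt (1 - m\<^sup>2))))
                \<le> C * \<alpha> * (cmod c * \<bar>ln (Im c)\<bar>)
            \<and> (\<exists>D. ((\<lambda>Y. Phi_app m U U1 \<alpha> c Y) has_vector_derivative D) (at 0 within {0..})
                   \<and> cmod (D - 1) \<le> C * \<alpha> * \<bar>ln (Im c)\<bar>))"
proof -
  interpret shear_profile m U U1 U2 U3
    using assms by unfold_locales
  show ?thesis
    using holomorphic_Phi_app Phi_app_at_0_asymptotics by blast
qed

end
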